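(* Let $\nu>0$, $\tau>0$, $A>0$, $N\ge2$, and let $u^n$ ($n\ge0$) be generated by the CH scheme $u^0=\Pi_Nu_0$, $\frac{u^{n+1}-u^n}{\tau}=-\nu\Delta^2u^{n+1}+A\Delta(u^{n+1}-u^n)+\Delta\Pi_N(f(u^n))$ with $u_0$ of mean zero. Then for every $n\ge0$, with $E_n=E(u^n)$, $$E_{n+1}-E_n+\Big(A+\frac12+\sqrt{\frac{2\nu}{\tau}}\Big)\|u^{n+1}-u^n\|_2^2\le\|u^{n+1}-u^n\|_2^2\Big(\|u^n\|_\infty^2+\frac12\|u^{n+1}\|_\infty^2\Big).$$
   Context: $\mathbb T^2=\mathbb R^2/2\pi\mathbb Z^2$; $f(u)=u^3-u$, $F(u)=\frac14(u^2-1)^2$, $E(u)=\int_{\mathbb T^2}(\frac\nu2|\nabla u|^2+F(u))dx$; $\Pi_N$ is the $L^2$-orthogonal projection onto $X_N=\operatorname{span}\{\cos(k\cdot x),\sin(k\cdot x):|k|\le N\}$. *)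

theory Defs
  imports "HOL-Analysis.Analysis"
begin

text \<open>Functions on the torus R^2/(2 pi Z^2) are represented as functions on R^2 (pairs of reals);
  integrals and norms are taken over the fundamental domain [0,2pi]^2.\<close>

definition T2 :: "(real \<times> real) set" where
  "T2 = cbox (0, 0) (2 * pi, 2 * pi)"

definition fCH :: "real \<Rightarrow> real" where
  "fCH u = u ^ 3 - u"

definition FCH :: "real \<Rightarrow> real" where
  "FCH u = (u\<^sup>2 - 1)\<^sup>2 / 4"

definition freqs :: "nat \<Rightarrow> (int \<times> int) set" where
  "freqs N = {k. (fst k)\<^sup>2 + (snd k)\<^sup>2 \<le> (int N)\<^sup>2}"

definition kdot :: "int \<times> int \<Rightarrow> real \<times> real \<Rightarrow> real" where
  "kdot k x = real_of_int (fst k) * fst x + real_of_int (snd k) * snd x"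

definition XN :: "nat \<Rightarrow> (real \<times> real \<Rightarrow> real) set" where
  "XN N = {p. \<exists>a b :: int \<times> int \<Rightarrow> real.
              p = (\<lambda>x. \<Sum>k\<in>freqs N. a k * cos (kdot k x) + b k * sin (kdot k x))}"

definition PiN :: "nat \<Rightarrow> (real \<times> real \<Rightarrow> real) \<Rightarrow> (real \<times> real \<Rightarrow> real)" where
  "PiN N g = (THE p. p \<in> XN N \<and>
       (\<forall>q\<in>XN N. integral T2 (\<lambda>x. (g x - p x) * q x) = 0))"

definition pd1 :: "(real \<times> real \<Rightarrow> real) \<Rightarrow> real \<times> real \<Rightarrow> real" where
  "pd1 g x = deriv (\<lambda>s. g (s, snd x)) (fst x)"

definition pd2 :: "(real \<times> real \<Rightarrow> real) \<Rightarrow> real \<times> real \<Rightarrow> real" where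
  "pd2 g x = deriv (\<lambda>t. g (fst x, t)) (snd x)"

definition lap :: "(real \<times> real \<Rightarrow> real) \<Rightarrow> real \<times> real \<Rightarrow> real" where
  "lap g = (\<lambda>x. pd1 (pd1 g) x + pd2 (pd2 g) x)"

definition energy :: "real \<Rightarrow> (real \<times> real \<Rightarrow> real) \<Rightarrow> real" where
  "energy \<nu> u = integral T2 (\<lambda>x. \<nu> / 2 * ((pd1 u x)\<^sup>2 + (pd2 u x)\<^sup>2) + FCH (u x))"

definition L2norm :: "(real \<times> real \<Rightarrow> real) \<Rightarrow> real" where
  "L2norm g = sqrt (integral T2 (\<lambda>x. (g x)\<^sup>2))"

definition Linfnorm :: "(real \<times> real \<Rightarrow> real) \<Rightarrow> real" where
  "Linfnorm g = (SUP x\<in>T2. \<bar>g x\<bar>)"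

end

theory Submission
  imports Defs
begin

text \<open>
  Write \<open>\<delta> = u\<^sup>n\<^sup>+\<^sup>1 - u\<^sup>n\<close> and \<open>\<mu> = -\<nu>\<Delta>u\<^sup>n\<^sup>+\<^sup>1 + A\<delta> + \<Pi>\<^sub>N f(u\<^sup>n)\<close>, so the scheme reads
  \<open>\<delta> = \<tau>\<Delta>\<mu>\<close>.  Testing it against \<open>\<mu>\<close> and against \<open>\<delta>\<close> and integrating by parts gives
  \<open>\<integral>\<delta>\<mu> = -\<tau>\<parallel>\<nabla>\<mu>\<parallel>\<^sup>2\<close> and \<open>\<parallel>\<delta>\<parallel>\<^sup>2 = -\<tau>\<integral>\<nabla>\<mu>\<cdot>\<nabla>\<delta>\<close>; the projection can be dropped because
  \<open>\<delta> \<in> X\<^sub>N\<close>.  The energy difference is bounded pointwise using the exact expansion of the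
  gradient term and the bound \<open>F(b) - F(a) \<le> f(a)(b-a) + (b-a)\<^sup>2(a\<^sup>2 + b\<^sup>2/2 - 1/2)\<close>; the remaining
  gradient terms are absorbed by a weighted AM--GM inequality, producing \<open>\<surd>(2\<nu>/\<tau>)\<parallel>\<delta>\<parallel>\<^sup>2\<close>.
\<close>

subsection \<open>Trigonometric polynomials and their partial derivatives\<close>

text \<open>It contains \<open>X\<^sub>N\<close> and is closed under all the
  operations the scheme applies (products, partial derivatives, the nonlinearity).\<close>
inductive trig_poly :: "(real \<times> real \<Rightarrow> real) \<Rightarrow> bool" where
  const: "trig_poly (\<lambda>x. c)"
| cos: "trig_poly (\<lambda>x. cos (kdot k x))"
| sin: "trig_poly (\<lambda>x. sin (kdot k x))"
| add: "trig_poly f \<Longrightarrow> trig_poly g \<Longrightarrow> trig_poly (\<lambda>x. f x + g x)"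
| mult: "trig_poly f \<Longrightarrow> trig_poly g \<Longrightarrow> trig_poly (\<lambda>x. f x * g x)"

lemma trig_poly_cmult: "trig_poly f \<Longrightarrow> trig_poly (\<lambda>x. c * f x)"
  by (rule trig_poly.mult[OF trig_poly.const])

lemma trig_poly_diff: "trig_poly f \<Longrightarrow> trig_poly g \<Longrightarrow> trig_poly (\<lambda>x. f x - g x)"
  using trig_poly.add[OF _ trig_poly_cmult[of g "-1"], of f] by simp

lemma trig_poly_divide: "trig_poly f \<Longrightarrow> trig_poly (\<lambda>x. f x / c)"
  using trig_poly_cmult[of f "1 / c"] by simp

lemma trig_poly_sum: "(\<And>i. i \<in> I \<Longrightarrow> trig_poly (f i)) \<Longrightarrow> trig_poly (\<lambda>x. \<Sum>i\<in>I. f i x)"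
  by (induction I rule: infinite_finite_induct) (auto intro: trig_poly.intros)

lemma trig_poly_compose_poly:
  "trig_poly h \<Longrightarrow> trig_poly (\<lambda>x. fCH (h x))" "trig_poly h \<Longrightarrow> trig_poly (\<lambda>x. FCH (h x))"
proof -
  assume h: "trig_poly h"
  have "(\<lambda>x. fCH (h x)) = (\<lambda>x. h x * (h x * h x) - h x)"
    by (simp add: fCH_def power3_eq_cube mult.assoc)
  then show "trig_poly (\<lambda>x. fCH (h x))" using h by (simp add: trig_poly_diff trig_poly.mult)
  have "(\<lambda>x. FCH (h x)) = (\<lambda>x. 1/4 * ((h x * h x - 1) * (h x * h x - 1)))"
    by (simp add: FCH_def power2_eq_square)
  moreover have "trig_poly (\<lambda>x. 1/4 * ((h x * h x - 1) * (h x * h x - 1)))"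
    using h by (intro trig_poly_cmult trig_poly_diff trig_poly.mult trig_poly.const)
  ultimately show "trig_poly (\<lambda>x. FCH (h x))" by simp
qed

lemma kdot_partials:
  "((\<lambda>s. kdot k (s, t)) has_real_derivative real_of_int (fst k)) (at s)"
  "((\<lambda>t. kdot k (s, t)) has_real_derivative real_of_int (snd k)) (at t)"
  unfolding kdot_def by (auto intro!: derivative_eq_intros)

lemma trig_poly_partials:
  assumes "trig_poly f"
  shows "\<exists>f1 f2. trig_poly f1 \<and> trig_poly f2
     \<and> (\<forall>s t. ((\<lambda>s. f (s, t)) has_real_derivative f1 (s, t)) (at s))
     \<and> (\<forall>s t. ((\<lambda>t. f (s, t)) has_real_derivative f2 (s, t)) (at t))"
  using assms
proof induction
  case (const c)
  show ?case by (intro exI[of _ "\<lambda>x. 0"] conjI trig_poly.const) auto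
next
  case (cos k)
  have "trig_poly (\<lambda>x. - real_of_int (fst k) * sin (kdot k x))"
       "trig_poly (\<lambda>x. - real_of_int (snd k) * sin (kdot k x))"
    by (intro trig_poly_cmult trig_poly.sin)+
  moreover have "((\<lambda>s. cos (kdot k (s, t))) has_real_derivative
      - real_of_int (fst k) * sin (kdot k (s, t))) (at s)"
    "((\<lambda>t. cos (kdot k (s, t))) has_real_derivative
      - real_of_int (snd k) * sin (kdot k (s, t))) (at t)" for s t
    using DERIV_chain2[OF DERIV_cos kdot_partials(1)[of k t s]]
      DERIV_chain2[OF DERIV_cos kdot_partials(2)[of k s t]] by (simp_all add: mult.commute)
  ultimately show ?case by blast
next
  case (sin k)
  have "trig_poly (\<lambda>x. real_of_int (fst k) * cos (kdot k x))"
       "trig_poly (\<lambda>x. real_of_int (snd k) * cos (kdot k x))"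
    by (intro trig_poly_cmult trig_poly.cos)+
  moreover have "((\<lambda>s. sin (kdot k (s, t))) has_real_derivative
      real_of_int (fst k) * cos (kdot k (s, t))) (at s)"
    "((\<lambda>t. sin (kdot k (s, t))) has_real_derivative
      real_of_int (snd k) * cos (kdot k (s, t))) (at t)" for s t
    using DERIV_chain2[OF DERIV_sin kdot_partials(1)[of k t s]]
      DERIV_chain2[OF DERIV_sin kdot_partials(2)[of k s t]] by (simp_all add: mult.commute)
  ultimately show ?case by blast
next
  case (add f g)
  then obtain f1 f2 g1 g2 where "trig_poly f1" "trig_poly f2" "trig_poly g1" "trig_poly g2"
    and "\<forall>s t. ((\<lambda>s. f (s, t)) has_real_derivative f1 (s, t)) (at s)"
        "\<forall>s t. ((\<lambda>t. f (s, t)) has_real_derivative f2 (s, t)) (at t)"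
        "\<forall>s t. ((\<lambda>s. g (s, t)) has_real_derivative g1 (s, t)) (at s)"
        "\<forall>s t. ((\<lambda>t. g (s, t)) has_real_derivative g2 (s, t)) (at t)" by blast
  then show ?case
    by (intro exI[of _ "\<lambda>x. f1 x + g1 x"] exI[of _ "\<lambda>x. f2 x + g2 x"])
      (auto intro!: trig_poly.add DERIV_add)
next
  case (mult f g)
  then obtain f1 f2 g1 g2 where "trig_poly f1" "trig_poly f2" "trig_poly g1" "trig_poly g2"
    and d: "\<forall>s t. ((\<lambda>s. f (s, t)) has_real_derivative f1 (s, t)) (at s)"
        "\<forall>s t. ((\<lambda>t. f (s, t)) has_real_derivative f2 (s, t)) (at t)"
        "\<forall>s t. ((\<lambda>s. g (s, t)) has_real_derivative g1 (s, t)) (at s)"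
        "\<forall>s t. ((\<lambda>t. g (s, t)) has_real_derivative g2 (s, t)) (at t)" by blast
  moreover have "((\<lambda>s. f (s, t) * g (s, t)) has_real_derivative
      f1 (s, t) * g (s, t) + f (s, t) * g1 (s, t)) (at s)"
    "((\<lambda>t. f (s, t) * g (s, t)) has_real_derivative
      f2 (s, t) * g (s, t) + f (s, t) * g2 (s, t)) (at t)" for s t
    using DERIV_mult[OF d(1)[rule_format, of t s] d(3)[rule_format, of t s]]
      DERIV_mult[OF d(2)[rule_format, of s t] d(4)[rule_format, of s t]]
    by (simp_all add: mult.commute)
  ultimately show ?case using mult.hyps
    by (intro exI[of _ "\<lambda>x. f1 x * g x + f x * g1 x"] exI[of _ "\<lambda>x. f2 x * g x + f x * g2 x"])
      (auto intro!: trig_poly.add trig_poly.mult)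
qed

lemma pd1_eqI: "(\<And>s t. ((\<lambda>s. f (s, t)) has_real_derivative g (s, t)) (at s)) \<Longrightarrow> pd1 f = g"
  by (rule ext) (auto simp: pd1_def intro!: DERIV_imp_deriv)

lemma pd2_eqI: "(\<And>s t. ((\<lambda>t. f (s, t)) has_real_derivative g (s, t)) (at t)) \<Longrightarrow> pd2 f = g"
  by (rule ext) (auto simp: pd2_def intro!: DERIV_imp_deriv)

lemma trig_poly_pd1:
  assumes "trig_poly f"
  shows "trig_poly (pd1 f)" "((\<lambda>s. f (s, t)) has_real_derivative pd1 f (s, t)) (at s)"
proof -
  obtain f1 where "trig_poly f1" and d: "\<forall>s t. ((\<lambda>s. f (s, t)) has_real_derivative f1 (s, t)) (at s)"
    using trig_poly_partials[OF assms] by blast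
  moreover have "pd1 f = f1" using d by (intro pd1_eqI) blast
  ultimately show "trig_poly (pd1 f)" "((\<lambda>s. f (s, t)) has_real_derivative pd1 f (s, t)) (at s)"
    by simp_all
qed

lemma trig_poly_pd2:
  assumes "trig_poly f"
  shows "trig_poly (pd2 f)" "((\<lambda>t. f (s, t)) has_real_derivative pd2 f (s, t)) (at t)"
proof -
  obtain f2 where "trig_poly f2" and d: "\<forall>s t. ((\<lambda>t. f (s, t)) has_real_derivative f2 (s, t)) (at t)"
    using trig_poly_partials[OF assms] by blast
  moreover have "pd2 f = f2" using d by (intro pd2_eqI) blast
  ultimately show "trig_poly (pd2 f)" "((\<lambda>t. f (s, t)) has_real_derivative pd2 f (s, t)) (at t)"
    by simp_all
qed

lemma trig_poly_lap: "trig_poly f \<Longrightarrow> trig_poly (lap f)"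
  unfolding lap_def by (intro trig_poly.add trig_poly_pd1 trig_poly_pd2)

lemma pd_add:
  assumes "trig_poly f" "trig_poly g"
  shows "pd1 (\<lambda>x. f x + g x) = (\<lambda>x. pd1 f x + pd1 g x)"
    and "pd2 (\<lambda>x. f x + g x) = (\<lambda>x. pd2 f x + pd2 g x)"
  using assms by (auto intro!: pd1_eqI pd2_eqI DERIV_add trig_poly_pd1 trig_poly_pd2)

lemma pd_diff:
  assumes "trig_poly f" "trig_poly g"
  shows "pd1 (\<lambda>x. f x - g x) = (\<lambda>x. pd1 f x - pd1 g x)"
    and "pd2 (\<lambda>x. f x - g x) = (\<lambda>x. pd2 f x - pd2 g x)"
  using assms by (auto intro!: pd1_eqI pd2_eqI DERIV_diff trig_poly_pd1 trig_poly_pd2)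

lemma pd_cmult:
  assumes "trig_poly f"
  shows "pd1 (\<lambda>x. c * f x) = (\<lambda>x. c * pd1 f x)" and "pd2 (\<lambda>x. c * f x) = (\<lambda>x. c * pd2 f x)"
  using assms by (auto intro!: pd1_eqI pd2_eqI DERIV_cmult trig_poly_pd1 trig_poly_pd2)

lemma pd_mult:
  assumes "trig_poly f" "trig_poly g"
  shows "pd1 (\<lambda>x. f x * g x) = (\<lambda>x. pd1 f x * g x + f x * pd1 g x)"
    and "pd2 (\<lambda>x. f x * g x) = (\<lambda>x. pd2 f x * g x + f x * pd2 g x)"
proof -
  show "pd1 (\<lambda>x. f x * g x) = (\<lambda>x. pd1 f x * g x + f x * pd1 g x)"
    using DERIV_mult[OF trig_poly_pd1(2)[OF assms(1)] trig_poly_pd1(2)[OF assms(2)]]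
    by (intro pd1_eqI) (simp add: mult.commute)
  show "pd2 (\<lambda>x. f x * g x) = (\<lambda>x. pd2 f x * g x + f x * pd2 g x)"
    using DERIV_mult[OF trig_poly_pd2(2)[OF assms(1)] trig_poly_pd2(2)[OF assms(2)]]
    by (intro pd2_eqI) (simp add: mult.commute)
qed

lemma lap_add: "trig_poly f \<Longrightarrow> trig_poly g \<Longrightarrow> lap (\<lambda>x. f x + g x) = (\<lambda>x. lap f x + lap g x)"
  by (simp add: lap_def pd_add trig_poly_pd1 trig_poly_pd2 algebra_simps)

lemma lap_diff: "trig_poly f \<Longrightarrow> trig_poly g \<Longrightarrow> lap (\<lambda>x. f x - g x) = (\<lambda>x. lap f x - lap g x)"
  by (simp add: lap_def pd_diff trig_poly_pd1 trig_poly_pd2 algebra_simps)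

lemma lap_cmult: "trig_poly f \<Longrightarrow> lap (\<lambda>x. c * f x) = (\<lambda>x. c * lap f x)"
  by (simp add: lap_def pd_cmult trig_poly_pd1 trig_poly_pd2 distrib_left)

lemmas trig_poly_closed = trig_poly.const trig_poly.add trig_poly.mult trig_poly_cmult trig_poly_diff trig_poly_divide
  trig_poly_pd1(1) trig_poly_pd2(1) trig_poly_lap trig_poly_compose_poly

subsection \<open>Periodicity, integration by parts and Green's identity\<close>

lemma trig_poly_continuous: "trig_poly f \<Longrightarrow> continuous_on S f"
  by (induction rule: trig_poly.induct) (auto simp: kdot_def intro!: continuous_intros)

lemma trig_poly_integrable: "trig_poly f \<Longrightarrow> f integrable_on T2"
  unfolding T2_def by (intro integrable_continuous trig_poly_continuous)

lemma trig_poly_periodic: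
  "trig_poly f \<Longrightarrow> f (s + real_of_int m1 * (2 * pi), t + real_of_int m2 * (2 * pi)) = f (s, t)"
proof (induction rule: trig_poly.induct)
  case (cos k)
  show ?case using cos.plus_of_int[of "kdot k (s, t)" "fst k * m1 + snd k * m2"]
    by (simp add: kdot_def algebra_simps)
next
  case (sin k)
  show ?case using sin.plus_of_int[of "kdot k (s, t)" "fst k * m1 + snd k * m2"]
    by (simp add: kdot_def algebra_simps)
qed auto

lemma integral_derivative_periodic:
  fixes h h' :: "real \<Rightarrow> real"
  assumes "\<And>t. (h has_real_derivative h' t) (at t)" and "h (2 * pi) = h 0"
  shows "integral (cbox 0 (2 * pi)) h' = 0"
proof -
  have "(h' has_integral (h (2 * pi) - h 0)) {0..2 * pi}"
    using assms(1) by (intro fundamental_theorem_of_calculus)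
      (auto simp: has_real_derivative_iff_has_vector_derivative[symmetric]
        intro: has_field_derivative_at_within)
  then show ?thesis using assms(2) by (simp add: integral_unique)
qed

text \<open>Hence partial derivatives of trigonometric polynomials have zero mean over \<open>T2\<close>
  (Fubini reduces this to the one-dimensional statement along each line).\<close>
lemma integral_pd_zero:
  assumes "trig_poly f"
  shows "integral T2 (pd1 f) = 0" and "integral T2 (pd2 f) = 0"
proof -
  have c1: "continuous_on (cbox (0,0) (2*pi,2*pi)) (pd1 f)"
    and c1': "continuous_on (cbox (0,0) (2*pi,2*pi)) (\<lambda>(s, t). pd1 f (s, t))"
    and c2: "continuous_on (cbox (0,0) (2*pi,2*pi)) (pd2 f)"
    using trig_poly_continuous[OF trig_poly_pd1(1)[OF assms]]
      trig_poly_continuous[OF trig_poly_pd2(1)[OF assms]] by (simp_all add: case_prod_beta')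
  have "integral (cbox 0 (2*pi)) (\<lambda>s. pd1 f (s, t)) = 0" for t
    using trig_poly_periodic[OF assms, of 0 1 t 0]
    by (intro integral_derivative_periodic[where h="\<lambda>s. f (s, t)"] trig_poly_pd1(2)[OF assms]) simp
  then show "integral T2 (pd1 f) = 0"
    using integral_swap_continuous[OF c1'] unfolding T2_def integral_prod_continuous[OF c1]
    by simp
  have "integral (cbox 0 (2*pi)) (\<lambda>t. pd2 f (s, t)) = 0" for s
    using trig_poly_periodic[OF assms, of s 0 0 1]
    by (intro integral_derivative_periodic[where h="\<lambda>t. f (s, t)"] trig_poly_pd2(2)[OF assms]) simp
  then show "integral T2 (pd2 f) = 0"
    unfolding T2_def integral_prod_continuous[OF c2] by simp
qed

lemma integral_add_trig_poly:
  "trig_poly f \<Longrightarrow> trig_poly g \<Longrightarrow> integral T2 (\<lambda>x. f x + g x) = integral T2 f + integral T2 g"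
  by (intro integral_add trig_poly_integrable)

lemma integral_diff_trig_poly:
  "trig_poly f \<Longrightarrow> trig_poly g \<Longrightarrow> integral T2 (\<lambda>x. f x - g x) = integral T2 f - integral T2 g"
  by (intro integral_diff trig_poly_integrable)

lemma integration_by_parts:
  assumes "trig_poly f" "trig_poly g"
  shows "integral T2 (\<lambda>x. pd1 f x * g x) = - integral T2 (\<lambda>x. f x * pd1 g x)"
    and "integral T2 (\<lambda>x. pd2 f x * g x) = - integral T2 (\<lambda>x. f x * pd2 g x)"
proof -
  note tp = assms trig_poly_pd1(1) trig_poly_pd2(1)
  have "0 = integral T2 (pd1 (\<lambda>x. f x * g x))"
    using integral_pd_zero(1)[OF trig_poly.mult[OF assms]] by simp
  also have "\<dots> = integral T2 (\<lambda>x. pd1 f x * g x) + integral T2 (\<lambda>x. f x * pd1 g x)"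
    unfolding pd_mult(1)[OF assms] by (intro integral_add_trig_poly trig_poly.mult tp)
  finally show "integral T2 (\<lambda>x. pd1 f x * g x) = - integral T2 (\<lambda>x. f x * pd1 g x)" by simp
  have "0 = integral T2 (pd2 (\<lambda>x. f x * g x))"
    using integral_pd_zero(2)[OF trig_poly.mult[OF assms]] by simp
  also have "\<dots> = integral T2 (\<lambda>x. pd2 f x * g x) + integral T2 (\<lambda>x. f x * pd2 g x)"
    unfolding pd_mult(2)[OF assms] by (intro integral_add_trig_poly trig_poly.mult tp)
  finally show "integral T2 (\<lambda>x. pd2 f x * g x) = - integral T2 (\<lambda>x. f x * pd2 g x)" by simp
qed

definition dirichlet :: "(real \<times> real \<Rightarrow> real) \<Rightarrow> (real \<times> real \<Rightarrow> real) \<Rightarrow> real" where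
  "dirichlet f g = integral T2 (\<lambda>x. pd1 f x * pd1 g x + pd2 f x * pd2 g x)"

lemma dirichlet_commute: "dirichlet f g = dirichlet g f"
  unfolding dirichlet_def by (simp add: mult.commute)

lemma green:
  assumes "trig_poly f" "trig_poly g"
  shows "integral T2 (\<lambda>x. lap f x * g x) = - dirichlet f g"
proof -
  note tp = assms trig_poly_pd1(1) trig_poly_pd2(1)
  have "integral T2 (\<lambda>x. lap f x * g x)
      = integral T2 (\<lambda>x. pd1 (pd1 f) x * g x) + integral T2 (\<lambda>x. pd2 (pd2 f) x * g x)"
    unfolding lap_def distrib_right by (intro integral_add_trig_poly trig_poly.mult tp)
  also have "\<dots> = - integral T2 (\<lambda>x. pd1 f x * pd1 g x) - integral T2 (\<lambda>x. pd2 f x * pd2 g x)"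
    using integration_by_parts(1)[OF tp(3)[OF assms(1)] assms(2)]
      integration_by_parts(2)[OF tp(4)[OF assms(1)] assms(2)] by simp
  also have "\<dots> = - dirichlet f g"
    unfolding dirichlet_def by (subst integral_add_trig_poly) (auto intro!: trig_poly.mult tp)
  finally show ?thesis .
qed

subsection \<open>Orthogonal projection onto a finite family of continuous functions\<close>

lemma continuous_integrable_T2: "continuous_on T2 f \<Longrightarrow> (f :: real \<times> real \<Rightarrow> real) integrable_on T2"
  unfolding T2_def by (rule integrable_continuous)

lemma zero_if_integral_square_zero:
  fixes h :: "real \<times> real \<Rightarrow> real"
  assumes "continuous_on T2 h" "integral T2 (\<lambda>x. h x * h x) = 0" "x \<in> T2"
  shows "h x = 0"
proof -
  have cont: "continuous_on (cbox (0,0) (2*pi, 2*pi)) (\<lambda>x. h x * h x)"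
    using assms(1) unfolding T2_def by (auto intro!: continuous_intros)
  have "((\<lambda>x. h x * h x) has_integral 0) (cbox (0,0) (2*pi, 2*pi))"
    using integrable_integral[OF integrable_continuous[OF cont]] assms(2)
    unfolding T2_def by simp
  moreover have "box (0,0) (2*pi, 2*pi) \<noteq> {}"
    by (simp add: box_ne_empty Basis_prod_def)
  ultimately have "h x * h x = 0"
    using assms(3) unfolding T2_def by (intro has_integral_0_cbox_imp_0[OF cont]) auto
  then show ?thesis by simp
qed

lemma integral_times_lincomb:
  fixes h :: "real \<times> real \<Rightarrow> real" and \<phi> :: "'j \<Rightarrow> real \<times> real \<Rightarrow> real"
  assumes "finite J" "\<And>j. j \<in> J \<Longrightarrow> (\<lambda>x. h x * \<phi> j x) integrable_on T2"
  shows "(\<lambda>x. h x * (\<Sum>j\<in>J. c j * \<phi> j x)) integrable_on T2"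
    and "integral T2 (\<lambda>x. h x * (\<Sum>j\<in>J. c j * \<phi> j x)) = (\<Sum>j\<in>J. c j * integral T2 (\<lambda>x. h x * \<phi> j x))"
proof -
  have eq: "(\<lambda>x. h x * (\<Sum>j\<in>J. c j * \<phi> j x)) = (\<lambda>x. \<Sum>j\<in>J. c j * (h x * \<phi> j x))"
    by (simp add: sum_distrib_left mult.left_commute)
  show "(\<lambda>x. h x * (\<Sum>j\<in>J. c j * \<phi> j x)) integrable_on T2"
    unfolding eq using assms by (intro integrable_sum integrable_on_mult_right) auto
  show "integral T2 (\<lambda>x. h x * (\<Sum>j\<in>J. c j * \<phi> j x)) = (\<Sum>j\<in>J. c j * integral T2 (\<lambda>x. h x * \<phi> j x))"
    unfolding eq using assms by (subst integral_sum) (auto intro: integrable_on_mult_right)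
qed

text \<open>If \<open>\<psi>\<close> has zero norm it vanishes and \<open>a = 0\<close> works.\<close>
lemma gram_schmidt_step:
  fixes r \<psi> :: "real \<times> real \<Rightarrow> real" and \<phi> :: "'j \<Rightarrow> real \<times> real \<Rightarrow> real"
  assumes fin: "finite J"
    and \<psi>_cont: "continuous_on T2 \<psi>" and \<phi>_cont: "\<And>j. continuous_on T2 (\<phi> j)"
    and r_int: "\<And>j. j \<in> insert j0 J \<Longrightarrow> (\<lambda>x. r x * \<phi> j x) integrable_on T2"
    and r_orth: "\<And>i. i \<in> J \<Longrightarrow> integral T2 (\<lambda>x. r x * \<phi> i x) = 0"
    and \<psi>_orth: "\<And>i. i \<in> J \<Longrightarrow> integral T2 (\<lambda>x. \<psi> x * \<phi> i x) = 0"
    and decomp: "\<And>x. \<phi> j0 x = \<psi> x + (\<Sum>j\<in>J. d j * \<phi> j x)"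
  shows "\<exists>a. \<forall>i\<in>insert j0 J. integral T2 (\<lambda>x. (r x - a * \<psi> x) * \<phi> i x) = 0"
proof -
  define Q where "Q = integral T2 (\<lambda>x. \<psi> x * \<psi> x)"
  define R where "R = integral T2 (\<lambda>x. r x * \<psi> x)"
  define a where "a = R / Q"
  have \<psi>\<phi>_int: "(\<lambda>x. \<psi> x * \<phi> j x) integrable_on T2" for j
    by (intro continuous_integrable_T2 continuous_intros \<psi>_cont \<phi>_cont)
  have \<psi>\<psi>_int: "(\<lambda>x. \<psi> x * \<psi> x) integrable_on T2"
    by (intro continuous_integrable_T2 continuous_intros \<psi>_cont)
  have "(\<lambda>x. r x * \<phi> j0 x - r x * (\<Sum>j\<in>J. d j * \<phi> j x)) integrable_on T2"
    using r_int integral_times_lincomb(1)[OF fin, of r \<phi>] by (intro integrable_diff) auto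
  then have r\<psi>_int: "(\<lambda>x. r x * \<psi> x) integrable_on T2"
    by (simp add: decomp algebra_simps)
  have h_int: "(\<lambda>x. (r x - a * \<psi> x) * \<phi> j x) integrable_on T2" if "j \<in> insert j0 J" for j
    using integrable_diff[OF r_int[OF that] integrable_on_mult_right[OF \<psi>\<phi>_int[of j], of a]]
    by (simp add: algebra_simps)
  have h_orth: "integral T2 (\<lambda>x. (r x - a * \<psi> x) * \<phi> i x) = 0" if "i \<in> J" for i
    using integral_diff[OF r_int integrable_on_mult_right[OF \<psi>\<phi>_int[of i], of a]] that
      r_orth[OF that] \<psi>_orth[OF that] by (simp add: algebra_simps)
  have "R = a * Q"
  proof (cases "Q = 0")
    case True
    then have "\<psi> x = 0" if "x \<in> T2" for x
      using zero_if_integral_square_zero[OF \<psi>_cont _ that] by (simp add: Q_def)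
    then have "R = integral T2 (\<lambda>x. 0)" unfolding R_def by (intro integral_cong) simp
    then show ?thesis using True by simp
  qed (simp add: a_def)
  then have "integral T2 (\<lambda>x. (r x - a * \<psi> x) * \<psi> x) = 0"
    using integral_diff[OF r\<psi>_int integrable_on_mult_right[OF \<psi>\<psi>_int, of a]]
    by (simp add: Q_def R_def algebra_simps)
  moreover have "integral T2 (\<lambda>x. (r x - a * \<psi> x) * (\<Sum>j\<in>J. d j * \<phi> j x)) = 0"
    using integral_times_lincomb(2)[OF fin, of "\<lambda>x. r x - a * \<psi> x" \<phi> d] h_int h_orth by simp
  moreover have "(\<lambda>x. (r x - a * \<psi> x) * \<psi> x) integrable_on T2"
    using integrable_diff[OF r\<psi>_int integrable_on_mult_right[OF \<psi>\<psi>_int, of a]]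
    by (simp add: algebra_simps)
  ultimately have "integral T2 (\<lambda>x. (r x - a * \<psi> x) * \<phi> j0 x) = 0"
    using integral_times_lincomb(1)[OF fin, of "\<lambda>x. r x - a * \<psi> x" \<phi> d] h_int
    unfolding decomp distrib_left by (simp add: integral_add)
  then show ?thesis using h_orth by blast
qed

lemma orthogonal_projection_exists:
  fixes \<phi> :: "'j \<Rightarrow> real \<times> real \<Rightarrow> real" and g :: "real \<times> real \<Rightarrow> real"
  assumes \<phi>_cont: "\<And>j. continuous_on T2 (\<phi> j)" and "finite J"
    and "\<And>j. j \<in> J \<Longrightarrow> (\<lambda>x. g x * \<phi> j x) integrable_on T2"
  shows "\<exists>c. \<forall>i\<in>J. integral T2 (\<lambda>x. (g x - (\<Sum>j\<in>J. c j * \<phi> j x)) * \<phi> i x) = 0"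
  using assms(2,3)
proof (induction J arbitrary: g rule: finite_induct)
  case (insert j0 J)
  obtain c where c: "\<forall>i\<in>J. integral T2 (\<lambda>x. (g x - (\<Sum>j\<in>J. c j * \<phi> j x)) * \<phi> i x) = 0"
    using insert.IH insert.prems by blast
  have "(\<lambda>x. \<phi> j0 x * \<phi> j x) integrable_on T2" for j
    by (intro continuous_integrable_T2 continuous_intros \<phi>_cont)
  then obtain d where d: "\<forall>i\<in>J. integral T2 (\<lambda>x. (\<phi> j0 x - (\<Sum>j\<in>J. d j * \<phi> j x)) * \<phi> i x) = 0"
    using insert.IH[of "\<phi> j0"] by blast
  define r where "r x = g x - (\<Sum>j\<in>J. c j * \<phi> j x)" for x
  define \<psi> where "\<psi> x = \<phi> j0 x - (\<Sum>j\<in>J. d j * \<phi> j x)" for x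
  have r_int: "(\<lambda>x. r x * \<phi> j x) integrable_on T2" if "j \<in> insert j0 J" for j
  proof -
    have "(\<lambda>x. (\<Sum>i\<in>J. c i * \<phi> i x) * \<phi> j x) integrable_on T2"
      by (intro continuous_integrable_T2 continuous_intros \<phi>_cont)
    then show ?thesis
      using integrable_diff[OF insert.prems[OF that]] by (simp add: r_def algebra_simps)
  qed
  have \<psi>_cont: "continuous_on T2 \<psi>" unfolding \<psi>_def by (intro continuous_intros \<phi>_cont)
  have r_orth: "integral T2 (\<lambda>x. r x * \<phi> i x) = 0" if "i \<in> J" for i
    using c that by (simp add: r_def)
  have \<psi>_orth: "integral T2 (\<lambda>x. \<psi> x * \<phi> i x) = 0" if "i \<in> J" for i
    using d that by (simp add: \<psi>_def)
  have decomp: "\<phi> j0 x = \<psi> x + (\<Sum>j\<in>J. d j * \<phi> j x)" for x by (simp add: \<psi>_def)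
  obtain a where a: "\<forall>i\<in>insert j0 J. integral T2 (\<lambda>x. (r x - a * \<psi> x) * \<phi> i x) = 0"
    using gram_schmidt_step[OF insert.hyps(1) \<psi>_cont \<phi>_cont r_int r_orth \<psi>_orth decomp] by blast
  let ?c = "(\<lambda>j. c j - a * d j)(j0 := a)"
  have "(\<Sum>j\<in>insert j0 J. ?c j * \<phi> j x) = a * \<phi> j0 x + (\<Sum>j\<in>J. (c j - a * d j) * \<phi> j x)" for x
    using insert.hyps by (auto intro!: sum.cong)
  then have "g x - (\<Sum>j\<in>insert j0 J. ?c j * \<phi> j x) = r x - a * \<psi> x" for x
    by (simp add: r_def \<psi>_def left_diff_distrib sum_subtractf sum_distrib_left algebra_simps)
  then show ?case using a by (intro exI[of _ ?c]) simp
qed simp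

subsection \<open>The Galerkin space \<open>X\<^sub>N\<close> and the projection \<open>\<Pi>\<^sub>N\<close>\<close>

lemma finite_freqs: "finite (freqs N)"
proof (rule finite_subset)
  show "freqs N \<subseteq> {-int N..int N} \<times> {-int N..int N}"
  proof
    fix k assume "k \<in> freqs N"
    then have "(fst k)\<^sup>2 \<le> (int N)\<^sup>2" "(snd k)\<^sup>2 \<le> (int N)\<^sup>2"
      by (auto simp: freqs_def intro: order_trans[rotated])
    then have "\<bar>fst k\<bar> \<le> int N" "\<bar>snd k\<bar> \<le> int N"
      using abs_le_square_iff by (metis abs_of_nat)+
    then show "k \<in> {-int N..int N} \<times> {-int N..int N}" by (cases k) auto
  qed
qed simp

definition trig_basis :: "(int \<times> int) \<times> bool \<Rightarrow> real \<times> real \<Rightarrow> real" where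
  "trig_basis j x = (if snd j then cos (kdot (fst j) x) else sin (kdot (fst j) x))"

lemma trig_poly_basis: "trig_poly (trig_basis j)"
  unfolding trig_basis_def by (cases "snd j") (auto intro: trig_poly.cos trig_poly.sin)

lemma finite_basis_index: "finite (freqs N \<times> (UNIV :: bool set))"
  by (simp add: finite_freqs)

lemma XN_iff_lincomb:
  "p \<in> XN N \<longleftrightarrow> (\<exists>c. p = (\<lambda>x. \<Sum>j\<in>freqs N \<times> UNIV. c j * trig_basis j x))"
proof -
  have sum_eq: "(\<Sum>j\<in>freqs N \<times> UNIV. c j * trig_basis j x)
     = (\<Sum>k\<in>freqs N. c (k, True) * cos (kdot k x) + c (k, False) * sin (kdot k x))" for c x
  proof -
    have "(\<Sum>j\<in>freqs N \<times> UNIV. c j * trig_basis j x)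
        = (\<Sum>k\<in>freqs N. \<Sum>b\<in>UNIV. c (k, b) * trig_basis (k, b) x)"
      unfolding sum.cartesian_product by (simp add: case_prod_unfold)
    then show ?thesis by (simp add: UNIV_bool trig_basis_def add.commute)
  qed
  show ?thesis
  proof
    assume "p \<in> XN N"
    then obtain a b where "p = (\<lambda>x. \<Sum>k\<in>freqs N. a k * cos (kdot k x) + b k * sin (kdot k x))"
      by (auto simp: XN_def)
    then show "\<exists>c. p = (\<lambda>x. \<Sum>j\<in>freqs N \<times> UNIV. c j * trig_basis j x)"
      by (intro exI[of _ "\<lambda>j. if snd j then a (fst j) else b (fst j)"]) (simp add: sum_eq)
  next
    assume "\<exists>c. p = (\<lambda>x. \<Sum>j\<in>freqs N \<times> UNIV. c j * trig_basis j x)"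
    then obtain c where "p = (\<lambda>x. \<Sum>j\<in>freqs N \<times> UNIV. c j * trig_basis j x)" by blast
    then show "p \<in> XN N"
      unfolding XN_def sum_eq by (intro CollectI exI[of _ "\<lambda>k. c (k, True)"] exI[of _ "\<lambda>k. c (k, False)"])
  qed
qed

lemma XN_trig_poly: "p \<in> XN N \<Longrightarrow> trig_poly p"
  unfolding XN_iff_lincomb by (auto intro!: trig_poly_sum trig_poly_cmult trig_poly_basis)

lemma XN_diff:
  assumes "p \<in> XN N" "q \<in> XN N"
  shows "(\<lambda>x. p x - q x) \<in> XN N"
proof -
  obtain c d where "p = (\<lambda>x. \<Sum>j\<in>freqs N \<times> UNIV. c j * trig_basis j x)"
    "q = (\<lambda>x. \<Sum>j\<in>freqs N \<times> UNIV. d j * trig_basis j x)"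
    using assms unfolding XN_iff_lincomb by blast
  then show ?thesis unfolding XN_iff_lincomb
    by (intro exI[of _ "\<lambda>j. c j - d j"]) (simp add: left_diff_distrib sum_subtractf)
qed

lemma reduce_mod_2pi:
  "0 \<le> z - real_of_int \<lfloor>z / (2*pi)\<rfloor> * (2*pi) \<and> z - real_of_int \<lfloor>z / (2*pi)\<rfloor> * (2*pi) \<le> 2*pi"
proof -
  have "real_of_int \<lfloor>z / (2*pi)\<rfloor> * (2*pi) \<le> z / (2*pi) * (2*pi)"
    by (intro mult_right_mono) simp_all
  moreover have "z / (2*pi) * (2*pi) \<le> (real_of_int \<lfloor>z / (2*pi)\<rfloor> + 1) * (2*pi)"
    by (intro mult_right_mono) (linarith, simp)
  ultimately show ?thesis by (simp add: algebra_simps)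
qed

lemma trig_poly_zero_if_zero_on_T2:
  assumes "trig_poly h" "\<And>x. x \<in> T2 \<Longrightarrow> h x = 0"
  shows "h = (\<lambda>x. 0)"
proof
  fix y :: "real \<times> real"
  obtain s t where y: "y = (s, t)" by (cases y)
  define m1 where "m1 = \<lfloor>s / (2*pi)\<rfloor>"
  define m2 where "m2 = \<lfloor>t / (2*pi)\<rfloor>"
  have "h (s, t) = h ((s - real_of_int m1 * (2*pi)) + real_of_int m1 * (2*pi),
                     (t - real_of_int m2 * (2*pi)) + real_of_int m2 * (2*pi))"
    by simp
  also have "\<dots> = h (s - real_of_int m1 * (2*pi), t - real_of_int m2 * (2*pi))"
    by (rule trig_poly_periodic[OF assms(1)])
  also have "\<dots> = 0"
    using reduce_mod_2pi[of s] reduce_mod_2pi[of t]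
    by (intro assms(2)) (simp add: T2_def m1_def m2_def)
  finally show "h y = 0" using y by simp
qed

definition orth_proj_XN :: "nat \<Rightarrow> (real \<times> real \<Rightarrow> real) \<Rightarrow> (real \<times> real \<Rightarrow> real) \<Rightarrow> bool" where
  "orth_proj_XN N g p \<longleftrightarrow> p \<in> XN N \<and> (\<forall>q\<in>XN N. integral T2 (\<lambda>x. (g x - p x) * q x) = 0)"

context
  fixes g :: "real \<times> real \<Rightarrow> real"
  assumes g_int: "\<And>q. continuous_on T2 q \<Longrightarrow> (\<lambda>x. g x * q x) integrable_on T2"
begin

lemma residual_integrable:
  assumes "p \<in> XN N" "continuous_on T2 q"
  shows "(\<lambda>x. (g x - p x) * q x) integrable_on T2"
proof -
  have "(\<lambda>x. p x * q x) integrable_on T2"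
    by (intro continuous_integrable_T2 continuous_on_mult assms(2)
        trig_poly_continuous[OF XN_trig_poly[OF assms(1)]])
  then show ?thesis using integrable_diff[OF g_int[OF assms(2)]] by (simp add: algebra_simps)
qed

text \<open>Existence: project onto the spanning family; orthogonality to the family gives
  orthogonality to all of \<open>X\<^sub>N\<close> by linearity.\<close>
lemma orth_proj_XN_exists: "\<exists>p. orth_proj_XN N g p"
proof -
  have basis_cont: "continuous_on T2 (trig_basis j)" for j
    by (rule trig_poly_continuous[OF trig_poly_basis])
  obtain c where c: "\<forall>i\<in>freqs N \<times> UNIV.
      integral T2 (\<lambda>x. (g x - (\<Sum>j\<in>freqs N \<times> UNIV. c j * trig_basis j x)) * trig_basis i x) = 0"
    using orthogonal_projection_exists[OF basis_cont finite_basis_index g_int[OF basis_cont]] by (rule exE)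
  define p where "p x = (\<Sum>j\<in>freqs N \<times> UNIV. c j * trig_basis j x)" for x
  have pX: "p \<in> XN N" unfolding XN_iff_lincomb p_def by blast
  have "integral T2 (\<lambda>x. (g x - p x) * q x) = 0" if "q \<in> XN N" for q
  proof -
    obtain e where q: "q = (\<lambda>x. \<Sum>j\<in>freqs N \<times> UNIV. e j * trig_basis j x)"
      using \<open>q \<in> XN N\<close> by (auto simp: XN_iff_lincomb)
    have "integral T2 (\<lambda>x. (g x - p x) * q x)
        = (\<Sum>j\<in>freqs N \<times> UNIV. e j * integral T2 (\<lambda>x. (g x - p x) * trig_basis j x))"
      unfolding q by (rule integral_times_lincomb(2)[OF _ residual_integrable[OF pX basis_cont]])
        (rule finite_basis_index)
    also have "\<dots> = 0" using c by (intro sum.neutral) (simp add: p_def)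
    finally show ?thesis .
  qed
  then show ?thesis using pX unfolding orth_proj_XN_def by blast
qed

text \<open>Uniqueness: the difference \<open>h\<close> of two projections is orthogonal to itself, hence zero.\<close>
lemma orth_proj_XN_unique:
  assumes "orth_proj_XN N g p" "orth_proj_XN N g p'"
  shows "p = p'"
proof -
  have pX: "p \<in> XN N" and p'X: "p' \<in> XN N"
    and orth: "\<And>q. q \<in> XN N \<Longrightarrow> integral T2 (\<lambda>x. (g x - p x) * q x) = 0"
    and orth': "\<And>q. q \<in> XN N \<Longrightarrow> integral T2 (\<lambda>x. (g x - p' x) * q x) = 0"
    using assms by (auto simp: orth_proj_XN_def)
  define h where "h x = p x - p' x" for x
  have hX: "h \<in> XN N" unfolding h_def by (intro XN_diff pX p'X)
  have h_cont: "continuous_on T2 h" by (rule trig_poly_continuous[OF XN_trig_poly[OF hX]])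
  have "integral T2 (\<lambda>x. h x * h x) = integral T2 (\<lambda>x. (g x - p' x) * h x - (g x - p x) * h x)"
    by (rule integral_cong) (simp add: h_def algebra_simps)
  also have "\<dots> = 0"
    using integral_diff[OF residual_integrable[OF p'X h_cont] residual_integrable[OF pX h_cont]]
      orth[OF hX] orth'[OF hX] by simp
  finally have "h x = 0" if "x \<in> T2" for x
    using zero_if_integral_square_zero[OF h_cont _ that] by simp
  then have "h = (\<lambda>x. 0)" by (rule trig_poly_zero_if_zero_on_T2[OF XN_trig_poly[OF hX]])
  then show "p = p'" by (simp add: h_def fun_eq_iff)
qed

lemma PiN_orth_proj: "orth_proj_XN N g (PiN N g)"
proof -
  have "PiN N g = (THE p. orth_proj_XN N g p)" unfolding PiN_def orth_proj_XN_def ..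
  moreover have "\<exists>!p. orth_proj_XN N g p"
    using orth_proj_XN_exists orth_proj_XN_unique by blast
  ultimately show ?thesis using theI'[of "orth_proj_XN N g"] by simp
qed

end

subsection \<open>The one-step energy estimate\<close>

text \<open>Taylor-type bound for the double-well potential: \<open>F(b) - F(a) \<le> f(a)(b-a) + (b-a)\<^sup>2 (a\<^sup>2 + b\<^sup>2/2 - 1/2)\<close>;
  in fact the difference of the two sides is exactly \<open>-(b-a)\<^sup>4/4\<close>.\<close>
lemma FCH_difference_bound:
  "FCH b - FCH a \<le> fCH a * (b - a) + (b - a)\<^sup>2 * (a\<^sup>2 + b\<^sup>2 / 2 - 1/2)"
proof -
  have "fCH a * (b - a) + (b - a)\<^sup>2 * (a\<^sup>2 + b\<^sup>2 / 2 - 1/2) - (FCH b - FCH a) = (b - a)^4 / 4"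
    by (simp add: fCH_def FCH_def power2_eq_square power3_eq_cube power4_eq_xxxx field_simps)
  moreover have "0 \<le> (b - a)^4 / 4" by simp
  ultimately show ?thesis by linarith
qed

lemma weighted_amgm:
  fixes \<alpha> \<beta> d e :: real
  assumes "0 \<le> \<alpha>" "0 \<le> \<beta>"
  shows "0 \<le> \<alpha> * d\<^sup>2 + \<beta> * e\<^sup>2 + 2 * sqrt (\<alpha> * \<beta>) * (d * e)"
proof -
  have "\<alpha> * d\<^sup>2 + \<beta> * e\<^sup>2 + 2 * sqrt (\<alpha> * \<beta>) * (d * e) = (sqrt \<alpha> * d + sqrt \<beta> * e)\<^sup>2"
    using assms by (simp add: power2_eq_square real_sqrt_mult algebra_simps)
  then show ?thesis by simp
qed

lemma Linfnorm_bound: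
  assumes "trig_poly h" "x \<in> T2"
  shows "(h x)\<^sup>2 \<le> (Linfnorm h)\<^sup>2"
proof -
  have "compact ((\<lambda>x. \<bar>h x\<bar>) ` T2)" unfolding T2_def
    by (intro compact_continuous_image continuous_intros trig_poly_continuous assms(1)) simp
  then have "bdd_above ((\<lambda>x. \<bar>h x\<bar>) ` T2)" by (intro bounded_imp_bdd_above compact_imp_bounded)
  then have "\<bar>h x\<bar> \<le> Linfnorm h" unfolding Linfnorm_def using assms(2) by (rule cSUP_upper2) simp
  then show ?thesis by (metis abs_ge_zero power2_abs power_mono)
qed

lemma dirichlet_cross_bound:
  assumes "trig_poly f" "trig_poly g" "0 \<le> \<alpha>" "0 \<le> \<beta>"
  shows "0 \<le> \<alpha> * dirichlet f f + \<beta> * dirichlet g g + 2 * sqrt (\<alpha> * \<beta>) * dirichlet f g"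
proof -
  define c where "c = 2 * sqrt (\<alpha> * \<beta>)"
  have "0 \<le> integral T2 (\<lambda>x. \<alpha> * (pd1 f x * pd1 f x + pd2 f x * pd2 f x)
      + \<beta> * (pd1 g x * pd1 g x + pd2 g x * pd2 g x) + c * (pd1 f x * pd1 g x + pd2 f x * pd2 g x))"
  proof (rule integral_nonneg)
    fix x
    show "0 \<le> \<alpha> * (pd1 f x * pd1 f x + pd2 f x * pd2 f x)
      + \<beta> * (pd1 g x * pd1 g x + pd2 g x * pd2 g x) + c * (pd1 f x * pd1 g x + pd2 f x * pd2 g x)"
      using weighted_amgm[OF assms(3,4), of "pd1 f x" "pd1 g x"]
        weighted_amgm[OF assms(3,4), of "pd2 f x" "pd2 g x"]
      by (simp add: c_def power2_eq_square algebra_simps)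
  qed (intro trig_poly_integrable trig_poly_closed assms)
  also have "\<dots> = \<alpha> * dirichlet f f + \<beta> * dirichlet g g + c * dirichlet f g"
    unfolding dirichlet_def using assms(1,2)
    by (simp add: integral_add_trig_poly trig_poly_closed)
  finally show ?thesis by (simp add: c_def)
qed

text \<open>One-step energy estimate: the gradient part of \<open>E\<close> is expanded exactly around \<open>b\<close>, the
  potential part is bounded by \<open>FCH_difference_bound\<close> with \<open>\<bar>a\<bar>, \<bar>b\<bar>\<close> replaced by their sup norms.\<close>
lemma energy_difference_bound:
  assumes a: "trig_poly a" and b: "trig_poly b"
  defines "\<delta> \<equiv> \<lambda>x. b x - a x"
    and "M \<equiv> (Linfnorm a)\<^sup>2 + (Linfnorm b)\<^sup>2 / 2 - 1/2"
  shows "energy \<nu> b - energy \<nu> a \<le> \<nu> * dirichlet b \<delta> - \<nu>/2 * dirichlet \<delta> \<delta>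
           + integral T2 (\<lambda>x. fCH (a x) * \<delta> x) + M * integral T2 (\<lambda>x. \<delta> x * \<delta> x)"
proof -
  have \<delta>: "trig_poly \<delta>" unfolding \<delta>_def by (intro trig_poly_diff a b)
  have pd_\<delta>: "pd1 \<delta> x = pd1 b x - pd1 a x" "pd2 \<delta> x = pd2 b x - pd2 a x" for x
    unfolding \<delta>_def pd_diff[OF b a] by simp_all
  have "energy \<nu> b - energy \<nu> a = integral T2 (\<lambda>x. (\<nu> / 2 * ((pd1 b x)\<^sup>2 + (pd2 b x)\<^sup>2) + FCH (b x))
      - (\<nu> / 2 * ((pd1 a x)\<^sup>2 + (pd2 a x)\<^sup>2) + FCH (a x)))"
    unfolding energy_def power2_eq_square
    using a b by (intro integral_diff[symmetric] trig_poly_integrable trig_poly_closed)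
  also have "\<dots> \<le> integral T2 (\<lambda>x. \<nu> * (pd1 b x * pd1 \<delta> x + pd2 b x * pd2 \<delta> x)
      - \<nu>/2 * (pd1 \<delta> x * pd1 \<delta> x + pd2 \<delta> x * pd2 \<delta> x) + fCH (a x) * \<delta> x + M * (\<delta> x * \<delta> x))"
  proof (rule integral_le)
    fix x assume x: "x \<in> T2"
    have "(a x)\<^sup>2 + (b x)\<^sup>2 / 2 - 1/2 \<le> M"
      using Linfnorm_bound[OF a x] Linfnorm_bound[OF b x] by (simp add: M_def)
    then have "(\<delta> x)\<^sup>2 * ((a x)\<^sup>2 + (b x)\<^sup>2 / 2 - 1/2) \<le> (\<delta> x)\<^sup>2 * M"
      by (intro mult_left_mono) simp_all
    then have "FCH (b x) - FCH (a x) \<le> fCH (a x) * \<delta> x + M * (\<delta> x * \<delta> x)"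
      using FCH_difference_bound[of "b x" "a x"] by (simp add: \<delta>_def power2_eq_square mult.commute)
    then show "(\<nu> / 2 * ((pd1 b x)\<^sup>2 + (pd2 b x)\<^sup>2) + FCH (b x))
        - (\<nu> / 2 * ((pd1 a x)\<^sup>2 + (pd2 a x)\<^sup>2) + FCH (a x))
      \<le> \<nu> * (pd1 b x * pd1 \<delta> x + pd2 b x * pd2 \<delta> x)
        - \<nu>/2 * (pd1 \<delta> x * pd1 \<delta> x + pd2 \<delta> x * pd2 \<delta> x) + fCH (a x) * \<delta> x + M * (\<delta> x * \<delta> x)"
      by (simp add: pd_\<delta> power2_eq_square algebra_simps)
  qed (use a b \<delta> in \<open>intro trig_poly_integrable trig_poly_closed; simp add: power2_eq_square\<close>)+
  also have "\<dots> = \<nu> * dirichlet b \<delta> - \<nu>/2 * dirichlet \<delta> \<delta>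
      + integral T2 (\<lambda>x. fCH (a x) * \<delta> x) + M * integral T2 (\<lambda>x. \<delta> x * \<delta> x)"
    unfolding dirichlet_def using a b \<delta>
    by (simp add: integral_add_trig_poly integral_diff_trig_poly trig_poly_closed)
  finally show ?thesis .
qed

text \<open>Testing the scheme \<open>\<delta> = \<tau> \<Delta>\<mu>\<close>, \<open>\<mu> = -\<nu>\<Delta>b + A\<delta> + P\<close>, against \<open>\<mu>\<close> and against \<open>\<delta>\<close>
  (Green's identity), with \<open>P\<close> replaced by \<open>f(a)\<close> thanks to the orthogonality of the projection.\<close>
lemma scheme_identities:
  fixes \<nu> \<tau> A :: real
  assumes a: "trig_poly a" and b: "trig_poly b" and P: "trig_poly P"
    and \<delta>_def: "\<delta> = (\<lambda>x. b x - a x)"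
    and \<mu>_def: "\<mu> = (\<lambda>x. - \<nu> * lap b x + A * \<delta> x + P x)"
    and scheme: "\<And>x. \<delta> x = \<tau> * lap \<mu> x"
    and orth: "integral T2 (\<lambda>x. (fCH (a x) - P x) * \<delta> x) = 0"
  shows "\<nu> * dirichlet b \<delta> + integral T2 (\<lambda>x. fCH (a x) * \<delta> x)
           = - \<tau> * dirichlet \<mu> \<mu> - A * integral T2 (\<lambda>x. \<delta> x * \<delta> x)"
    and "integral T2 (\<lambda>x. \<delta> x * \<delta> x) = - \<tau> * dirichlet \<mu> \<delta>"
proof -
  have \<delta>: "trig_poly \<delta>" unfolding \<delta>_def by (intro trig_poly_diff a b)
  have \<mu>: "trig_poly \<mu>" unfolding \<mu>_def by (intro trig_poly_closed b \<delta> P)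
  have test: "integral T2 (\<lambda>x. \<delta> x * g x) = - \<tau> * dirichlet \<mu> g" if "trig_poly g" for g
  proof -
    have "integral T2 (\<lambda>x. \<delta> x * g x) = integral T2 (\<lambda>x. \<tau> * (lap \<mu> x * g x))"
      by (simp add: scheme mult.assoc)
    also have "\<dots> = - \<tau> * dirichlet \<mu> g" by (simp add: green[OF \<mu> that])
    finally show ?thesis .
  qed
  have "integral T2 (\<lambda>x. \<delta> x * \<mu> x)
      = integral T2 (\<lambda>x. (- \<nu>) * (lap b x * \<delta> x) + A * (\<delta> x * \<delta> x) + P x * \<delta> x)"
    by (simp add: \<mu>_def algebra_simps)
  also have "\<dots> = \<nu> * dirichlet b \<delta> + A * integral T2 (\<lambda>x. \<delta> x * \<delta> x) + integral T2 (\<lambda>x. P x * \<delta> x)"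
    using b \<delta> P by (simp add: integral_add_trig_poly integral_diff_trig_poly trig_poly_closed green)
  also have "integral T2 (\<lambda>x. P x * \<delta> x) = integral T2 (\<lambda>x. fCH (a x) * \<delta> x)"
    using orth a \<delta> P by (simp add: left_diff_distrib integral_diff_trig_poly trig_poly_closed)
  finally show "\<nu> * dirichlet b \<delta> + integral T2 (\<lambda>x. fCH (a x) * \<delta> x)
      = - \<tau> * dirichlet \<mu> \<mu> - A * integral T2 (\<lambda>x. \<delta> x * \<delta> x)"
    using test[OF \<mu>] by simp
  show "integral T2 (\<lambda>x. \<delta> x * \<delta> x) = - \<tau> * dirichlet \<mu> \<delta>" by (rule test[OF \<delta>])
qed

lemma sqrt_weight_identity:
  fixes \<nu> \<tau> :: real
  assumes "0 < \<tau>"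
  shows "2 * sqrt (\<nu> / 2 * \<tau>) = sqrt (2 * \<nu> / \<tau>) * \<tau>"
proof -
  have "sqrt 4 = (2 :: real)" using real_sqrt_abs[of 2] by simp
  then have "2 * sqrt (\<nu> / 2 * \<tau>) = sqrt 4 * sqrt (\<nu> / 2 * \<tau>)" by simp
  also have "\<dots> = sqrt (4 * (\<nu> / 2 * \<tau>))" by (rule real_sqrt_mult[symmetric])
  also have "\<dots> = sqrt (2 * \<nu> / \<tau> * \<tau>\<^sup>2)"
    using assms by (simp add: power2_eq_square)
  also have "\<dots> = sqrt (2 * \<nu> / \<tau>) * sqrt (\<tau>\<^sup>2)" by (rule real_sqrt_mult)
  also have "\<dots> = sqrt (2 * \<nu> / \<tau>) * \<tau>" using assms by simp
  finally show ?thesis .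
qed

lemma discrete_energy_step:
  fixes \<nu> \<tau> A :: real
  assumes a: "trig_poly a" and b: "trig_poly b" and P: "trig_poly P"
    and \<nu>: "0 < \<nu>" and \<tau>: "0 < \<tau>"
  defines "\<delta> \<equiv> \<lambda>x. b x - a x"
    and "\<mu> \<equiv> \<lambda>x. - \<nu> * lap b x + A * (b x - a x) + P x"
  assumes scheme: "\<And>x. \<delta> x = \<tau> * lap \<mu> x"
    and orth: "integral T2 (\<lambda>x. (fCH (a x) - P x) * \<delta> x) = 0"
  shows "energy \<nu> b - energy \<nu> a + (A + 1/2 + sqrt (2 * \<nu> / \<tau>)) * integral T2 (\<lambda>x. \<delta> x * \<delta> x)
    \<le> integral T2 (\<lambda>x. \<delta> x * \<delta> x) * ((Linfnorm a)\<^sup>2 + 1/2 * (Linfnorm b)\<^sup>2)"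
proof -
  define S where "S = integral T2 (\<lambda>x. \<delta> x * \<delta> x)"
  define s where "s = sqrt (2 * \<nu> / \<tau>)"
  have \<delta>: "trig_poly \<delta>" unfolding \<delta>_def by (intro trig_poly_diff a b)
  have \<mu>: "trig_poly \<mu>" unfolding \<mu>_def by (intro trig_poly_closed a b P)
  have \<delta>_eq: "\<delta> = (\<lambda>x. b x - a x)" and \<mu>_eq: "\<mu> = (\<lambda>x. - \<nu> * lap b x + A * \<delta> x + P x)"
    by (simp_all add: \<delta>_def \<mu>_def)
  note identities = scheme_identities[OF a b P \<delta>_eq \<mu>_eq scheme orth]
  have identity_\<mu>: "\<nu> * dirichlet b \<delta> + integral T2 (\<lambda>x. fCH (a x) * \<delta> x)
      = - \<tau> * dirichlet \<mu> \<mu> - A * S"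
    using identities(1) by (simp only: S_def)
  have identity_\<delta>: "S = - \<tau> * dirichlet \<mu> \<delta>"
    using identities(2) by (simp only: S_def)
  have "0 \<le> \<nu>/2 * dirichlet \<delta> \<delta> + \<tau> * dirichlet \<mu> \<mu> + s * \<tau> * dirichlet \<delta> \<mu>"
    using dirichlet_cross_bound[OF \<delta> \<mu>, of "\<nu>/2" \<tau>] \<nu> \<tau>
    by (simp only: sqrt_weight_identity s_def)
  then have cross: "0 \<le> \<nu>/2 * dirichlet \<delta> \<delta> + \<tau> * dirichlet \<mu> \<mu> - s * S"
    using identity_\<delta> dirichlet_commute[of \<delta> \<mu>] by simp
  have "energy \<nu> b - energy \<nu> a
      \<le> \<nu> * dirichlet b \<delta> - \<nu>/2 * dirichlet \<delta> \<delta> + integral T2 (\<lambda>x. fCH (a x) * \<delta> x)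
        + ((Linfnorm a)\<^sup>2 + (Linfnorm b)\<^sup>2 / 2 - 1/2) * S"
    using energy_difference_bound[OF a b, of \<nu>] unfolding S_def \<delta>_def .
  then show ?thesis
    using identity_\<mu> cross unfolding S_def[symmetric] s_def[symmetric]
    by (simp add: algebra_simps)
qed

subsection \<open>The energy inequality for the scheme\<close>

text \<open>An absolutely integrable function times a continuous one is integrable on \<open>T2\<close>;
  this is what makes \<open>\<Pi>\<^sub>N u\<^sub>0\<close> well defined.\<close>
lemma absolutely_integrable_times_continuous:
  fixes g q :: "real \<times> real \<Rightarrow> real"
  assumes "g absolutely_integrable_on T2" "continuous_on T2 q"
  shows "(\<lambda>x. g x * q x) integrable_on T2"
proof -
  have T2: "T2 \<in> sets lebesgue" unfolding T2_def by (intro fmeasurableD lmeasurable_cbox)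
  have "(\<lambda>x. q x * g x) absolutely_integrable_on T2"
  proof (rule absolutely_integrable_bounded_measurable_product[where h="(*)", OF bilinear_times])
    show "q \<in> borel_measurable (lebesgue_on T2)"
      by (intro continuous_imp_measurable_on_sets_lebesgue assms T2)
    show "bounded (q ` T2)" unfolding T2_def
      by (intro compact_imp_bounded compact_continuous_image) (use assms in \<open>auto simp: T2_def\<close>)
  qed (rule T2, rule assms)
  then show ?thesis by (simp add: set_lebesgue_integral_eq_integral(1) mult.commute)
qed

lemma L2norm_square:
  assumes "trig_poly g"
  shows "(L2norm g)\<^sup>2 = integral T2 (\<lambda>x. g x * g x)"
proof -
  have "0 \<le> integral T2 (\<lambda>x. (g x)\<^sup>2)"
    using assms by (intro integral_nonneg trig_poly_integrable) (simp_all add: power2_eq_square trig_poly.mult)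
  then show ?thesis by (simp add: L2norm_def power2_eq_square)
qed

text \<open>Main theorem: every iterate lies in \<open>X\<^sub>N\<close>, the scheme has the form required by
  \<open>discrete_energy_step\<close> (linearity of \<open>\<Delta>\<close>), and \<open>\<Pi>\<^sub>N f(u\<^sup>n)\<close> is orthogonal projection.\<close>
theorem lemma2p2:
  fixes \<nu> \<tau> A :: real and N :: nat
    and u0 :: "real \<times> real \<Rightarrow> real"
    and u :: "nat \<Rightarrow> real \<times> real \<Rightarrow> real"
  assumes "\<nu> > 0" and "\<tau> > 0" and "A > 0" and "N \<ge> 2"
    and "u0 absolutely_integrable_on T2"
    and "(\<lambda>x. (u0 x)\<^sup>2) integrable_on T2"
    and "integral T2 u0 = 0"
    and "u 0 = PiN N u0"
    and "\<And>n. u (Suc n) \<in> XN N"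
    and "\<And>n x. (u (Suc n) x - u n x) / \<tau> =
            - \<nu> * lap (lap (u (Suc n))) x
            + A * lap (\<lambda>y. u (Suc n) y - u n y) x
            + lap (PiN N (\<lambda>y. fCH (u n y))) x"
  shows "energy \<nu> (u (Suc n)) - energy \<nu> (u n)
           + (A + 1/2 + sqrt (2 * \<nu> / \<tau>)) * (L2norm (\<lambda>x. u (Suc n) x - u n x))\<^sup>2
         \<le> (L2norm (\<lambda>x. u (Suc n) x - u n x))\<^sup>2
           * ((Linfnorm (u n))\<^sup>2 + 1/2 * (Linfnorm (u (Suc n)))\<^sup>2)"
proof -
  have u_XN: "u m \<in> XN N" for m
    using assms(8,9) PiN_orth_proj[OF absolutely_integrable_times_continuous[OF assms(5)]]
    by (cases m) (auto simp: orth_proj_XN_def)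
  define a b where "a = u n" and "b = u (Suc n)"
  define P where "P = PiN N (\<lambda>y. fCH (a y))"
  have a: "trig_poly a" and b: "trig_poly b" unfolding a_def b_def by (rule XN_trig_poly[OF u_XN])+
  have "orth_proj_XN N (\<lambda>y. fCH (a y)) P"
    unfolding P_def
    by (intro PiN_orth_proj continuous_integrable_T2 continuous_on_mult
        trig_poly_continuous[OF trig_poly_compose_poly(1)[OF a]])
  then have P: "trig_poly P" and orth: "integral T2 (\<lambda>x. (fCH (a x) - P x) * (b x - a x)) = 0"
    using XN_diff[OF u_XN u_XN] by (auto simp: orth_proj_XN_def a_def b_def intro: XN_trig_poly)
  have "lap (\<lambda>x. - \<nu> * lap b x + A * (b x - a x) + P x)
      = (\<lambda>x. - \<nu> * lap (lap b) x + A * lap (\<lambda>y. b y - a y) x + lap P x)"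
    using a b P by (simp add: lap_add lap_diff lap_cmult trig_poly_closed)
  then have "b x - a x = \<tau> * lap (\<lambda>x. - \<nu> * lap b x + A * (b x - a x) + P x) x" for x
    using assms(10)[of n x] assms(2) by (simp add: a_def b_def P_def field_simps)
  from discrete_energy_step[OF a b P assms(1,2) this orth] show ?thesis
    using L2norm_square[OF trig_poly_diff[OF b a]] by (simp add: a_def b_def)
qed

end
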